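(* Let $\lambda<0$, $a,b>0$ with $-b<\frac{\lambda}{2}$. (a) Let $\epsilon>0$. If $X\sim\mathrm{K}(\lambda,a\epsilon,b;1,\epsilon^{-1})$ and $Y\sim\mathrm{Ga}(-\lambda,a\epsilon)$ are independent and $(U,V)=\tilde F^\epsilon_{\mathrm{K\text{-}Ga},A}(X,Y)$, then $U,V$ are independent with $U\sim\mathrm{K}(-\lambda,a\epsilon,b;1,\epsilon^{-1})$ and $V\sim\mathrm{Be}'(b+\frac{\lambda}{2},-\lambda)$. (b) If $X\sim\mathrm{Ga}(b+\frac{\lambda}{2},a)$ and $Y\sim\mathrm{Ga}(-\lambda,a)$ are independent and $(U,V)=F^+_{\mathrm{Ga}}(X,Y)$, then $U,V$ are independent with $U\sim\mathrm{Ga}(b-\frac{\lambda}{2},a)$ and $V\sim\mathrm{Be}'(b+\frac{\lambda}{2},-\lambda)$.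
   Context: $\mathbb{R}_+=(0,\infty)$. For $p,q>0$, $a>0$, $-b<\frac{\lambda}{2}$: $\mathrm{K}(\lambda,a,b;p,q)$ has density on $\mathbb{R}_+$ proportional to $x^{\lambda-1}e^{-apx}(1+qx^{-1})^{-b+\frac{\lambda}{2}}$. $\mathrm{Ga}(A,C)$ ($A,C>0$) has density proportional to $x^{A-1}e^{-Cx}$. $\mathrm{Be}'(A,B)$ ($A,B>0$) has density proportional to $x^{A-1}(1+x)^{-A-B}$. $\tilde F^\epsilon_{\mathrm{K\text{-}Ga},A}(x,y)=\left(x+y,\ \frac{x(1+\epsilon x+\epsilon y)}{y}\right)$ and $F^+_{\mathrm{Ga}}(x,y)=\left(x+y,\ \frac{x}{y}\right)$, maps on $\mathbb{R}_+^2$. *)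

theory Defs
  imports "HOL-Probability.Probability"
begin

definition normalized_density :: "(real \<Rightarrow> real) \<Rightarrow> real \<Rightarrow> ennreal" where
  "normalized_density g x = ennreal (g x / (LINT t|lborel. g t))"

definition K_kernel :: "real \<Rightarrow> real \<Rightarrow> real \<Rightarrow> real \<Rightarrow> real \<Rightarrow> real \<Rightarrow> real" where
  "K_kernel lam a b p q x =
     (if 0 < x then x powr (lam - 1) * exp (- a * p * x) * (1 + q / x) powr (- b + lam / 2) else 0)"

definition K_density :: "real \<Rightarrow> real \<Rightarrow> real \<Rightarrow> real \<Rightarrow> real \<Rightarrow> real \<Rightarrow> ennreal" where
  "K_density lam a b p q = normalized_density (K_kernel lam a b p q)"

definition Ga_kernel :: "real \<Rightarrow> real \<Rightarrow> real \<Rightarrow> real" where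
  "Ga_kernel A C x = (if 0 < x then x powr (A - 1) * exp (- C * x) else 0)"

definition Ga_density :: "real \<Rightarrow> real \<Rightarrow> real \<Rightarrow> ennreal" where
  "Ga_density A C = normalized_density (Ga_kernel A C)"

definition BetaPrime_kernel :: "real \<Rightarrow> real \<Rightarrow> real \<Rightarrow> real" where
  "BetaPrime_kernel A B x = (if 0 < x then x powr (A - 1) * (1 + x) powr (- A - B) else 0)"

definition BetaPrime_density :: "real \<Rightarrow> real \<Rightarrow> real \<Rightarrow> ennreal" where
  "BetaPrime_density A B = normalized_density (BetaPrime_kernel A B)"

definition F_KGa_A :: "real \<Rightarrow> real \<times> real \<Rightarrow> real \<times> real" where
  "F_KGa_A eps xy = (case xy of (x, y) \<Rightarrow> (x + y, x * (1 + eps * x + eps * y) / y))"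

definition F_Ga_plus :: "real \<times> real \<Rightarrow> real \<times> real" where
  "F_Ga_plus xy = (case xy of (x, y) \<Rightarrow> (x + y, x / y))"

end

theory Submission
  imports Defs
begin

text \<open>
  On the open quadrant the map \<open>F_KGa_A \<epsilon>\<close> is a bijection with inverse
  \<open>(u, v) \<mapsto> (u v / (1 + \<epsilon> u + v), u (1 + \<epsilon> u) / (1 + \<epsilon> u + v))\<close>
  and Jacobian \<open>u (1 + \<epsilon> u) / (1 + \<epsilon> u + v)\<^sup>2\<close>. Transported along it, the product
  density of \<open>(X, Y)\<close> becomes a kernel in \<open>u\<close> times a beta-prime kernel in \<open>v\<close>.
  A joint density of product form makes the coordinates independent, and normalizing the two
  factors identifies the marginals. Part (b) is the same computation for \<open>\<epsilon> = 0\<close>,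
  since \<open>F_Ga_plus = F_KGa_A 0\<close>.
\<close>

section \<open>Joint densities of product form\<close>

lemma (in prob_space) indep_var_lborel_iff:
  "indep_var lborel X lborel Y \<longleftrightarrow> indep_var borel X borel Y"
proof -
  have sets: "sets (case_bool lborel lborel i) = sets (case_bool borel borel i)" for i :: bool
    by (cases i) auto
  have meas: "measurable M (case_bool lborel lborel i) = measurable M (case_bool borel borel i)"
    for i :: bool
    by (intro measurable_cong_sets) (auto simp: sets)
  show ?thesis
    unfolding indep_var_def indep_vars_def2 sets meas ..
qed

lemma (in prob_space) indep_var_of_joint_product_density:
  fixes U V :: "'a \<Rightarrow> real"
  assumes UV: "distributed M (lborel \<Otimes>\<^sub>M lborel) (\<lambda>\<omega>. (U \<omega>, V \<omega>)) (\<lambda>(u, v). p u * q v)"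
    and [measurable]: "p \<in> borel_measurable lborel" "q \<in> borel_measurable lborel"
    and p1: "(\<integral>\<^sup>+x. p x \<partial>lborel) = 1" and q1: "(\<integral>\<^sup>+x. q x \<partial>lborel) = 1"
  shows "indep_var borel U borel V \<and> distributed M lborel U p \<and> distributed M lborel V q"
proof -
  have sf: "sigma_finite_measure (lborel :: real measure)" ..
  have "distributed M lborel U (\<lambda>u. \<integral>\<^sup>+v. p u * q v \<partial>lborel)"
    using distr_marginal1[OF sf sf UV] by simp
  then have dU: "distributed M lborel U p"
    by (simp add: nn_integral_cmult q1)
  have "distributed M lborel V (\<lambda>v. \<integral>\<^sup>+u. p u * q v \<partial>lborel)"
    using distr_marginal2[OF sf sf UV] by simp
  then have dV: "distributed M lborel V q"
    by (simp add: nn_integral_multc p1)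
  interpret Q: sigma_finite_measure "density lborel q"
    by (intro prob_space_imp_sigma_finite prob_spaceI) (simp add: emeasure_density q1)
  have "distr M lborel U \<Otimes>\<^sub>M distr M lborel V = distr M (lborel \<Otimes>\<^sub>M lborel) (\<lambda>\<omega>. (U \<omega>, V \<omega>))"
    using distributed_distr_eq_density[OF dU] distributed_distr_eq_density[OF dV]
      distributed_distr_eq_density[OF UV]
    by (simp add: pair_measure_density[OF _ _ lborel.sigma_finite_measure_axioms
          Q.sigma_finite_measure_axioms])
  then have "indep_var lborel U lborel V"
    using dU dV by (auto simp: indep_var_distribution_eq dest: distributed_measurable)
  with dU dV show ?thesis
    by (simp add: indep_var_lborel_iff)
qed

lemma normalized_density_eq:
  fixes g :: "real \<Rightarrow> real"
  assumes [measurable]: "g \<in> borel_measurable borel" and g: "\<And>x. 0 \<le> g x"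
    and Z: "(\<integral>\<^sup>+x. ennreal (g x) \<partial>lborel) = ennreal Z" "0 \<le> Z"
  shows "normalized_density g x = ennreal (g x / Z)"
proof -
  have "integrable lborel g"
    using Z g by (intro integrableI_nn_integral_finite) auto
  then have "ennreal (LINT t|lborel. g t) = ennreal Z"
    using Z g by (subst nn_integral_eq_integral[symmetric]) auto
  then have "(LINT t|lborel. g t) = Z"
    using Z g by (simp add: integral_nonneg)
  then show ?thesis
    by (simp add: normalized_density_def)
qed

lemma nn_integral_normalized_density:
  fixes g :: "real \<Rightarrow> real"
  assumes [measurable]: "g \<in> borel_measurable borel" and g: "\<And>x. 0 \<le> g x"
    and Z: "(\<integral>\<^sup>+x. ennreal (g x) \<partial>lborel) = ennreal Z" "0 < Z"
  shows "(\<integral>\<^sup>+x. normalized_density g x \<partial>lborel) = 1"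
proof -
  have "(\<integral>\<^sup>+x. normalized_density g x \<partial>lborel) = (\<integral>\<^sup>+x. ennreal (1 / Z) * ennreal (g x) \<partial>lborel)"
    using Z g by (intro nn_integral_cong) (simp add: normalized_density_eq ennreal_mult[symmetric])
  also have "\<dots> = 1"
    using Z by (simp add: nn_integral_cmult ennreal_mult[symmetric])
  finally show ?thesis .
qed

lemma normalized_density_cmult:
  assumes "0 < c"
  shows "normalized_density (\<lambda>x. c * g x) = normalized_density g"
  using assms by (simp add: normalized_density_def fun_eq_iff)

lemma (in prob_space) normalized_density_integral_pos:
  assumes X: "distributed M lborel X (normalized_density g)" and g: "\<And>x. 0 \<le> g x"
  shows "0 < (LINT t|lborel. g t)"
proof (rule ccontr)
  assume "\<not> ?thesis"
  then have "(LINT t|lborel. g t) = 0"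
    using g by (simp add: integral_nonneg order.antisym)
  then have "normalized_density g = (\<lambda>_. 0)"
    by (simp add: normalized_density_def fun_eq_iff)
  then have "distr M lborel X = density lborel (\<lambda>_. 0)"
    using distributed_distr_eq_density[OF X] by simp
  moreover have "prob_space (distr M lborel X)"
    using distributed_measurable[OF X] by (intro prob_space_distr) simp
  ultimately show False
    using prob_space.emeasure_space_1 by (fastforce simp: emeasure_density)
qed

text \<open>No integrability of \<open>h\<close> and \<open>k\<close> is assumed: since the joint law has total mass 1,
  both integrals are forced to be finite and positive.\<close>

lemma (in prob_space) indep_var_of_joint_product_kernel:
  fixes U V :: "'a \<Rightarrow> real" and h k :: "real \<Rightarrow> real"
  assumes UV: "distributed M (lborel \<Otimes>\<^sub>M lborel) (\<lambda>\<omega>. (U \<omega>, V \<omega>)) (\<lambda>(u, v). ennreal (h u * k v))"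
    and [measurable]: "h \<in> borel_measurable borel" "k \<in> borel_measurable borel"
    and h: "\<And>x. 0 \<le> h x" and k: "\<And>x. 0 \<le> k x"
  shows "indep_var borel U borel V \<and> distributed M lborel U (normalized_density h)
    \<and> distributed M lborel V (normalized_density k)"
proof -
  define Ih where "Ih = (\<integral>\<^sup>+x. ennreal (h x) \<partial>lborel)"
  define Ik where "Ik = (\<integral>\<^sup>+x. ennreal (k x) \<partial>lborel)"
  have "prob_space (density (lborel \<Otimes>\<^sub>M lborel) (\<lambda>(u, v). ennreal (h u * k v)))"
    using UV by (metis distributed_distr_eq_density distributed_measurable prob_space_distr)
  then have "1 = emeasure (density (lborel \<Otimes>\<^sub>M lborel) (\<lambda>(u, v). ennreal (h u * k v)))
      (space (lborel \<Otimes>\<^sub>M lborel))"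
    by (metis prob_space.emeasure_space_1 space_density)
  also have "\<dots> = (\<integral>\<^sup>+z. ennreal (h (fst z) * k (snd z)) \<partial>(lborel \<Otimes>\<^sub>M lborel))"
    by (subst emeasure_density[OF _ sets.top]) (auto simp: split_beta')
  also have "\<dots> = (\<integral>\<^sup>+u. \<integral>\<^sup>+v. ennreal (h u) * ennreal (k v) \<partial>lborel \<partial>lborel)"
    using h k by (subst lborel.nn_integral_fst[symmetric]) (auto simp: ennreal_mult)
  also have "\<dots> = Ih * Ik"
    by (simp add: Ih_def Ik_def nn_integral_cmult nn_integral_multc)
  finally have mass: "Ih * Ik = 1" ..
  have "Ih \<noteq> \<top>" "Ik \<noteq> \<top>"
    using mass by (metis ennreal_mult_eq_top_iff ennreal_one_neq_top mult_zero_left mult_zero_right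
        zero_neq_one)+
  then obtain Zh Zk where Zh: "Ih = ennreal Zh" "0 \<le> Zh" and Zk: "Ik = ennreal Zk" "0 \<le> Zk"
    by (metis ennreal_cases)
  with mass have ZhZk: "Zh * Zk = 1"
    by (simp add: ennreal_mult[symmetric] ennreal_eq_1)
  with Zh Zk have pos: "0 < Zh" "0 < Zk"
    by (auto simp: order_le_less)
  have nh: "normalized_density h x = ennreal (h x / Zh)" for x
    using normalized_density_eq[of h Zh] Zh h by (simp add: Ih_def)
  have nk: "normalized_density k x = ennreal (k x / Zk)" for x
    using normalized_density_eq[of k Zk] Zk k by (simp add: Ik_def)
  have "ennreal (h u * k v) = normalized_density h u * normalized_density k v" for u v
  proof -
    have "h u * k v = h u / Zh * (k v / Zk)"
      using ZhZk by (simp add: field_simps)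
    then show ?thesis
      using h k pos by (simp add: nh nk ennreal_mult[symmetric])
  qed
  then have "distributed M (lborel \<Otimes>\<^sub>M lborel) (\<lambda>\<omega>. (U \<omega>, V \<omega>))
      (\<lambda>(u, v). normalized_density h u * normalized_density k v)"
    using UV by (simp add: split_beta')
  moreover have "(\<integral>\<^sup>+x. normalized_density h x \<partial>lborel) = 1" "(\<integral>\<^sup>+x. normalized_density k x \<partial>lborel) = 1"
    using nn_integral_normalized_density[of h Zh] nn_integral_normalized_density[of k Zk] Zh Zk pos h k
    by (simp_all add: Ih_def Ik_def)
  moreover have "normalized_density h \<in> borel_measurable lborel" "normalized_density k \<in> borel_measurable lborel"
    unfolding normalized_density_def by measurable
  ultimately show ?thesis
    by (intro indep_var_of_joint_product_density)
qed

section \<open>Transporting a product density along \<open>F_KGa_A\<close>\<close>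

lemma measurable_F_KGa_A [measurable]:
  "F_KGa_A eps \<in> lborel \<Otimes>\<^sub>M lborel \<rightarrow>\<^sub>M lborel \<Otimes>\<^sub>M lborel"
  unfolding F_KGa_A_def by (simp add: split_beta')

lemma F_KGa_A_inverse:
  fixes eps u v :: real
  assumes "0 \<le> eps" "0 < u" "0 < v"
  shows "F_KGa_A eps (u * v / (1 + eps * u + v), u * (1 + eps * u) / (1 + eps * u + v)) = (u, v)"
proof -
  define S where "S = 1 + eps * u"
  define x where "x = u * v / (S + v)"
  define y where "y = u * S / (S + v)"
  have S: "0 < S" "0 < S + v"
    using assms by (auto simp: S_def add_pos_nonneg)
  have "x + y = u * (S + v) / (S + v)"
    by (simp add: x_def y_def add_divide_distrib algebra_simps)
  then have sum: "x + y = u"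
    using S by simp
  then have "1 + eps * x + eps * y = S"
    by (metis S_def add.assoc distrib_left)
  moreover have "x = v / S * y" "y \<noteq> 0"
    using S assms by (simp_all add: x_def y_def)
  ultimately have "x * (1 + eps * x + eps * y) / y = v"
    using S by simp
  with sum have "F_KGa_A eps (x, y) = (u, v)"
    by (simp add: F_KGa_A_def)
  then show ?thesis
    unfolding x_def y_def S_def .
qed

definition F_KGa_A_image_density ::
    "real \<Rightarrow> (real \<Rightarrow> ennreal) \<Rightarrow> (real \<Rightarrow> ennreal) \<Rightarrow> real \<times> real \<Rightarrow> ennreal" where
  "F_KGa_A_image_density eps f g = (\<lambda>(u, v).
     if 0 < u \<and> 0 < v then
       ennreal (u * (1 + eps * u) / (1 + eps * u + v)\<^sup>2)
         * f (u * v / (1 + eps * u + v)) * g (u * (1 + eps * u) / (1 + eps * u + v))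
     else 0)"

lemma measurable_F_KGa_A_image_density [measurable]:
  assumes [measurable]: "f \<in> borel_measurable borel" "g \<in> borel_measurable borel"
  shows "F_KGa_A_image_density eps f g \<in> borel_measurable (lborel \<Otimes>\<^sub>M lborel)"
  unfolding F_KGa_A_image_density_def by measurable

lemma nn_integral_lborel_rescale:
  fixes f :: "real \<Rightarrow> ennreal" and c :: real
  assumes [measurable]: "f \<in> borel_measurable borel" and vanish: "\<And>x. c \<le> 0 \<Longrightarrow> f x = 0"
  shows "(\<integral>\<^sup>+x. f x \<partial>lborel) = (\<integral>\<^sup>+w. ennreal c * f (c * w) \<partial>lborel)"
proof (cases "0 < c")
  case True
  then show ?thesis
    using nn_integral_real_affine[of f c 0] by (simp add: nn_integral_cmult)
next
  case False
  then show ?thesis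
    using vanish by (simp add: ennreal_neg)
qed

lemma F_KGa_A_image_density_rescaling:
  fixes f g :: "real \<Rightarrow> ennreal" and \<phi> :: "real \<times> real \<Rightarrow> ennreal" and eps u v :: real
  assumes f0: "\<And>x. x \<le> 0 \<Longrightarrow> f x = 0" and g0: "\<And>y. y \<le> 0 \<Longrightarrow> g y = 0" and eps: "0 \<le> eps"
  defines "w \<equiv> 1 / (1 + eps * u) * v"
  defines "y \<equiv> 1 / (1 + w) * u"
  shows "ennreal (1 / (1 + eps * u)) * (ennreal (1 / (1 + w))
      * (ennreal y * (\<phi> (F_KGa_A eps (y * w, y)) * (f (y * w) * g y))))
    = \<phi> (u, v) * F_KGa_A_image_density eps f g (u, v)"
proof (cases "0 < u \<and> 0 < v")
  case True
  define S where "S = 1 + eps * u"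
  have S: "0 < S" "0 < S + v"
    using eps True by (auto simp: S_def add_pos_nonneg)
  then have t: "1 / (1 + w) = S / (S + v)"
    by (simp add: w_def S_def field_simps)
  then have y: "y = u * S / (S + v)"
    by (simp add: y_def)
  then have x: "y * w = u * v / (S + v)"
    using S by (simp add: w_def S_def)
  have "1 / (1 + eps * u) * (1 / (1 + w)) * y = u * S / (S + v)\<^sup>2"
    using S by (simp add: t y S_def power2_eq_square)
  then have jacobian: "ennreal (1 / (1 + eps * u)) * ennreal (1 / (1 + w)) * ennreal y
      = ennreal (u * S / (S + v)\<^sup>2)"
    using S True by (simp add: t y S_def ennreal_mult[symmetric])
  have inverse: "F_KGa_A eps (y * w, y) = (u, v)"
    unfolding x using F_KGa_A_inverse[of eps u v] eps True by (simp add: y S_def)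
  have "ennreal (1 / (1 + eps * u)) * (ennreal (1 / (1 + w))
      * (ennreal y * (\<phi> (F_KGa_A eps (y * w, y)) * (f (y * w) * g y))))
    = ennreal (u * S / (S + v)\<^sup>2) * (\<phi> (u, v) * (f (u * v / (S + v)) * g (u * S / (S + v))))"
    unfolding mult.assoc[symmetric] jacobian inverse unfolding x unfolding y ..
  with True show ?thesis
    by (simp add: F_KGa_A_image_density_def S_def ac_simps)
next
  case False
  have "\<not> (0 < 1 / (1 + eps * u) \<and> 0 < 1 / (1 + w) \<and> 0 < y \<and> 0 < y * w)"
  proof
    assume pos: "0 < 1 / (1 + eps * u) \<and> 0 < 1 / (1 + w) \<and> 0 < y \<and> 0 < y * w"
    then have "0 < u"
      using zero_less_mult_iff[of "1 / (1 + w)" u] by (simp add: y_def)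
    moreover from pos have "0 < w"
      using zero_less_mult_iff[of y w] by auto
    with pos have "0 < v"
      by (simp add: w_def zero_less_divide_iff)
    ultimately show False
      using False by simp
  qed
  with False show ?thesis
    by (auto simp: F_KGa_A_image_density_def ennreal_neg f0 g0 not_less)
qed

lemma nn_integral_F_KGa_A:
  fixes f g :: "real \<Rightarrow> ennreal" and \<phi> :: "real \<times> real \<Rightarrow> ennreal"
  assumes [measurable]: "f \<in> borel_measurable borel" "g \<in> borel_measurable borel"
      "\<phi> \<in> borel_measurable (lborel \<Otimes>\<^sub>M lborel)"
    and f0: "\<And>x. x \<le> 0 \<Longrightarrow> f x = 0" and g0: "\<And>y. y \<le> 0 \<Longrightarrow> g y = 0" and eps: "0 \<le> eps"
  shows "(\<integral>\<^sup>+z. \<phi> (F_KGa_A eps z) * (f (fst z) * g (snd z)) \<partial>(lborel \<Otimes>\<^sub>M lborel))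
    = (\<integral>\<^sup>+z. \<phi> z * F_KGa_A_image_density eps f g z \<partial>(lborel \<Otimes>\<^sub>M lborel))"
proof -
  interpret lborel_pair: pair_sigma_finite lborel lborel ..
  \<comment> \<open>The inverse of \<open>F_KGa_A eps\<close> is composed of the three one-dimensional rescalings
    \<open>x = y w\<close>, \<open>y = u / (1 + w)\<close>, \<open>w = v / (1 + eps u)\<close>, each performed on the inner integral.\<close>
  define h where "h x y = \<phi> (F_KGa_A eps (x, y)) * (f x * g y)" for x y
  define A where "A w y = ennreal y * h (y * w) y" for w y
  define B where "B w u = ennreal (1 / (1 + w)) * A w (1 / (1 + w) * u)" for w u
  define C where "C u v = ennreal (1 / (1 + eps * u)) * B (1 / (1 + eps * u) * v) u" for u v
  have [measurable]: "(\<lambda>(x, y). h x y) \<in> borel_measurable (lborel \<Otimes>\<^sub>M lborel)"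
    unfolding h_def by measurable
  have [measurable]: "(\<lambda>(w, y). A w y) \<in> borel_measurable (lborel \<Otimes>\<^sub>M lborel)"
    unfolding A_def by measurable
  have [measurable]: "(\<lambda>(w, u). B w u) \<in> borel_measurable (lborel \<Otimes>\<^sub>M lborel)"
    unfolding B_def by measurable
  have [measurable]: "(\<lambda>(u, v). C u v) \<in> borel_measurable (lborel \<Otimes>\<^sub>M lborel)"
    unfolding C_def by measurable
  have "(\<integral>\<^sup>+z. \<phi> (F_KGa_A eps z) * (f (fst z) * g (snd z)) \<partial>(lborel \<Otimes>\<^sub>M lborel))
      = (\<integral>\<^sup>+x. \<integral>\<^sup>+y. h x y \<partial>lborel \<partial>lborel)"
    by (subst lborel.nn_integral_fst[symmetric]) (auto simp: h_def[abs_def])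
  also have "\<dots> = (\<integral>\<^sup>+y. \<integral>\<^sup>+x. h x y \<partial>lborel \<partial>lborel)"
    by (rule lborel_pair.Fubini'[symmetric]) simp
  also have "\<dots> = (\<integral>\<^sup>+y. \<integral>\<^sup>+w. A w y \<partial>lborel \<partial>lborel)"
    unfolding A_def by (intro nn_integral_cong nn_integral_lborel_rescale) (auto simp: h_def g0)
  also have "\<dots> = (\<integral>\<^sup>+w. \<integral>\<^sup>+y. A w y \<partial>lborel \<partial>lborel)"
    by (rule lborel_pair.Fubini') simp
  also have "\<dots> = (\<integral>\<^sup>+w. \<integral>\<^sup>+u. B w u \<partial>lborel \<partial>lborel)"
  proof -
    have "A w y = 0" if "1 / (1 + w) \<le> 0" for w y
    proof (cases "0 < y")
      case True
      with that have "y * w \<le> 0"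
        by (simp add: mult_nonpos_nonneg divide_le_0_1_iff mult_le_0_iff)
      then show ?thesis
        by (simp add: A_def h_def f0)
    qed (simp add: A_def ennreal_neg)
    then show ?thesis
      unfolding B_def by (intro nn_integral_cong nn_integral_lborel_rescale) auto
  qed
  also have "\<dots> = (\<integral>\<^sup>+u. \<integral>\<^sup>+w. B w u \<partial>lborel \<partial>lborel)"
    by (rule lborel_pair.Fubini'[symmetric]) simp
  also have "\<dots> = (\<integral>\<^sup>+u. \<integral>\<^sup>+v. C u v \<partial>lborel \<partial>lborel)"
  proof -
    have "B w u = 0" if "1 / (1 + eps * u) \<le> 0" for u w
    proof (cases "0 < 1 / (1 + w)")
      case True
      from that eps have "u < 0"
        by (smt (verit, best) divide_le_0_1_iff mult_nonneg_nonneg)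
      with True have "1 / (1 + w) * u < 0"
        by (simp add: divide_neg_pos)
      then show ?thesis
        by (simp add: B_def A_def ennreal_neg)
    qed (simp add: B_def ennreal_neg)
    then show ?thesis
      unfolding C_def by (intro nn_integral_cong nn_integral_lborel_rescale) auto
  qed
  also have "\<dots> = (\<integral>\<^sup>+z. C (fst z) (snd z) \<partial>(lborel \<Otimes>\<^sub>M lborel))"
    by (subst lborel.nn_integral_fst[symmetric]) (auto simp: split_beta')
  also have "\<dots> = (\<integral>\<^sup>+z. \<phi> z * F_KGa_A_image_density eps f g z \<partial>(lborel \<Otimes>\<^sub>M lborel))"
  proof -
    have "C u v = \<phi> (u, v) * F_KGa_A_image_density eps f g (u, v)" for u v
      unfolding C_def B_def A_def h_def by (rule F_KGa_A_image_density_rescaling[OF f0 g0 eps])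
    then show ?thesis
      by (intro nn_integral_cong) (simp add: split_beta')
  qed
  finally show ?thesis .
qed

lemma distr_F_KGa_A_product_density:
  fixes f g :: "real \<Rightarrow> ennreal"
  assumes [measurable]: "f \<in> borel_measurable borel" "g \<in> borel_measurable borel"
    and f0: "\<And>x. x \<le> 0 \<Longrightarrow> f x = 0" and g0: "\<And>y. y \<le> 0 \<Longrightarrow> g y = 0" and eps: "0 \<le> eps"
  shows "distr (density (lborel \<Otimes>\<^sub>M lborel) (\<lambda>(x, y). f x * g y)) (lborel \<Otimes>\<^sub>M lborel) (F_KGa_A eps)
    = density (lborel \<Otimes>\<^sub>M lborel) (F_KGa_A_image_density eps f g)"
proof (rule measure_eqI)
  fix A
  assume "A \<in> sets (distr (density (lborel \<Otimes>\<^sub>M lborel) (\<lambda>(x, y). f x * g y))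
    (lborel \<Otimes>\<^sub>M lborel) (F_KGa_A eps))"
  then have A[measurable]: "A \<in> sets (lborel \<Otimes>\<^sub>M lborel)"
    by simp
  define D where "D = density (lborel \<Otimes>\<^sub>M lborel) (\<lambda>(x, y). f x * g y)"
  have "emeasure (distr D (lborel \<Otimes>\<^sub>M lborel) (F_KGa_A eps)) A
      = (\<integral>\<^sup>+z. indicator A z \<partial>distr D (lborel \<Otimes>\<^sub>M lborel) (F_KGa_A eps))"
    using A by simp
  also have "\<dots> = (\<integral>\<^sup>+z. indicator A (F_KGa_A eps z) \<partial>D)"
    by (simp add: D_def nn_integral_distr)
  also have "\<dots> = (\<integral>\<^sup>+z. indicator A (F_KGa_A eps z) * (f (fst z) * g (snd z)) \<partial>(lborel \<Otimes>\<^sub>M lborel))"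
    by (simp add: D_def nn_integral_density split_beta' mult.commute)
  also have "\<dots> = (\<integral>\<^sup>+z. indicator A z * F_KGa_A_image_density eps f g z \<partial>(lborel \<Otimes>\<^sub>M lborel))"
    by (rule nn_integral_F_KGa_A) (auto simp: f0 g0 eps)
  also have "\<dots> = emeasure (density (lborel \<Otimes>\<^sub>M lborel) (F_KGa_A_image_density eps f g)) A"
    using A by (simp add: emeasure_density mult.commute)
  finally show "emeasure (distr D (lborel \<Otimes>\<^sub>M lborel) (F_KGa_A eps)) A
    = emeasure (density (lborel \<Otimes>\<^sub>M lborel) (F_KGa_A_image_density eps f g)) A" .
qed simp

lemma (in prob_space) distributed_F_KGa_A:
  fixes X Y :: "'a \<Rightarrow> real" and f g :: "real \<Rightarrow> ennreal"
  assumes X: "distributed M lborel X f" and Y: "distributed M lborel Y g"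
    and indep: "indep_var borel X borel Y"
    and f0: "\<And>x. x \<le> 0 \<Longrightarrow> f x = 0" and g0: "\<And>y. y \<le> 0 \<Longrightarrow> g y = 0" and eps: "0 \<le> eps"
  shows "distributed M (lborel \<Otimes>\<^sub>M lborel) (\<lambda>\<omega>. F_KGa_A eps (X \<omega>, Y \<omega>)) (F_KGa_A_image_density eps f g)"
proof -
  have [measurable]: "f \<in> borel_measurable borel" "g \<in> borel_measurable borel"
      "X \<in> borel_measurable M" "Y \<in> borel_measurable M"
    using distributed_borel_measurable[OF X] distributed_borel_measurable[OF Y]
      distributed_measurable[OF X] distributed_measurable[OF Y] by simp_all
  have "distributed M (lborel \<Otimes>\<^sub>M lborel) (\<lambda>\<omega>. (X \<omega>, Y \<omega>)) (\<lambda>(x, y). f x * g y)"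
    using indep by (intro distributed_joint_indep X Y lborel.sigma_finite_measure_axioms)
      (simp add: indep_var_lborel_iff)
  then have "distr M (lborel \<Otimes>\<^sub>M lborel) (\<lambda>\<omega>. F_KGa_A eps (X \<omega>, Y \<omega>))
      = distr (density (lborel \<Otimes>\<^sub>M lborel) (\<lambda>(x, y). f x * g y)) (lborel \<Otimes>\<^sub>M lborel) (F_KGa_A eps)"
    by (simp add: distributed_distr_eq_density[symmetric] distr_distr comp_def)
  also have "\<dots> = density (lborel \<Otimes>\<^sub>M lborel) (F_KGa_A_image_density eps f g)"
    using f0 g0 eps by (intro distr_F_KGa_A_product_density) auto
  finally show ?thesis
    by (simp add: distributed_def)
qed

lemma F_KGa_A_image_density_factorization:
  fixes gX gY h k :: "real \<Rightarrow> real" and \<kappa> eps ZX ZY :: real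
  assumes Z: "0 < ZX" "0 < ZY" and eps: "0 \<le> eps"
    and nonneg: "\<And>x. 0 \<le> gX x" "\<And>x. 0 \<le> gY x"
    and support: "\<And>x. x \<le> 0 \<Longrightarrow> h x = 0" "\<And>x. x \<le> 0 \<Longrightarrow> k x = 0"
    and factorization: "\<And>u v. 0 < u \<Longrightarrow> 0 < v \<Longrightarrow>
      u * (1 + eps * u) / (1 + eps * u + v)\<^sup>2
        * gX (u * v / (1 + eps * u + v)) * gY (u * (1 + eps * u) / (1 + eps * u + v))
      = \<kappa> * h u * k v"
  shows "F_KGa_A_image_density eps (\<lambda>x. ennreal (gX x / ZX)) (\<lambda>x. ennreal (gY x / ZY))
    = (\<lambda>(u, v). ennreal (\<kappa> / (ZX * ZY) * h u * k v))"
proof (intro ext, clarify)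
  fix u v :: real
  show "F_KGa_A_image_density eps (\<lambda>x. ennreal (gX x / ZX)) (\<lambda>x. ennreal (gY x / ZY)) (u, v)
    = ennreal (\<kappa> / (ZX * ZY) * h u * k v)"
  proof (cases "0 < u \<and> 0 < v")
    case True
    moreover have "0 \<le> eps * u"
      using eps True by simp
    ultimately have "0 < 1 + eps * u" "0 < 1 + eps * u + v"
      by linarith+
    with True Z nonneg show ?thesis
      by (simp add: F_KGa_A_image_density_def ennreal_mult[symmetric] factorization[symmetric])
  next
    case False
    then show ?thesis
      using support by (auto simp: F_KGa_A_image_density_def not_less)
  qed
qed

lemma (in prob_space) indep_var_F_KGa_A_of_factorization:
  fixes X Y :: "'a \<Rightarrow> real" and gX gY h k :: "real \<Rightarrow> real" and \<kappa> eps :: real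
  assumes X: "distributed M lborel X (normalized_density gX)"
    and Y: "distributed M lborel Y (normalized_density gY)"
    and indep: "indep_var borel X borel Y" and eps: "0 \<le> eps" and \<kappa>: "0 < \<kappa>"
    and [measurable]: "gX \<in> borel_measurable borel" "gY \<in> borel_measurable borel"
      "h \<in> borel_measurable borel" "k \<in> borel_measurable borel"
    and nonneg: "\<And>x. 0 \<le> gX x" "\<And>x. 0 \<le> gY x" "\<And>x. 0 \<le> h x" "\<And>x. 0 \<le> k x"
    and support: "\<And>x. x \<le> 0 \<Longrightarrow> gX x = 0" "\<And>x. x \<le> 0 \<Longrightarrow> gY x = 0"
      "\<And>x. x \<le> 0 \<Longrightarrow> h x = 0" "\<And>x. x \<le> 0 \<Longrightarrow> k x = 0"
    and factorization: "\<And>u v. 0 < u \<Longrightarrow> 0 < v \<Longrightarrow>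
      u * (1 + eps * u) / (1 + eps * u + v)\<^sup>2
        * gX (u * v / (1 + eps * u + v)) * gY (u * (1 + eps * u) / (1 + eps * u + v))
      = \<kappa> * h u * k v"
  shows "indep_var borel (\<lambda>\<omega>. fst (F_KGa_A eps (X \<omega>, Y \<omega>))) borel (\<lambda>\<omega>. snd (F_KGa_A eps (X \<omega>, Y \<omega>)))
    \<and> distributed M lborel (\<lambda>\<omega>. fst (F_KGa_A eps (X \<omega>, Y \<omega>))) (normalized_density h)
    \<and> distributed M lborel (\<lambda>\<omega>. snd (F_KGa_A eps (X \<omega>, Y \<omega>))) (normalized_density k)"
proof -
  define ZX where "ZX = (LINT t|lborel. gX t)"
  define ZY where "ZY = (LINT t|lborel. gY t)"
  have Z: "0 < ZX" "0 < ZY"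
    unfolding ZX_def ZY_def using X Y nonneg by (auto intro: normalized_density_integral_pos)
  have "normalized_density gX = (\<lambda>x. ennreal (gX x / ZX))"
    and "normalized_density gY = (\<lambda>x. ennreal (gY x / ZY))"
    by (simp_all add: fun_eq_iff normalized_density_def ZX_def ZY_def)
  with Z nonneg support factorization eps
  have "F_KGa_A_image_density eps (normalized_density gX) (normalized_density gY)
      = (\<lambda>(u, v). ennreal (\<kappa> / (ZX * ZY) * h u * k v))"
    by (simp only: F_KGa_A_image_density_factorization)
  moreover have "distributed M (lborel \<Otimes>\<^sub>M lborel) (\<lambda>\<omega>. F_KGa_A eps (X \<omega>, Y \<omega>))
      (F_KGa_A_image_density eps (normalized_density gX) (normalized_density gY))"
    using X Y indep eps support by (intro distributed_F_KGa_A) (auto simp: normalized_density_def)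
  ultimately have "distributed M (lborel \<Otimes>\<^sub>M lborel)
      (\<lambda>\<omega>. (fst (F_KGa_A eps (X \<omega>, Y \<omega>)), snd (F_KGa_A eps (X \<omega>, Y \<omega>))))
      (\<lambda>(u, v). ennreal ((\<kappa> / (ZX * ZY) * h u) * k v))"
    by simp
  then have "indep_var borel (\<lambda>\<omega>. fst (F_KGa_A eps (X \<omega>, Y \<omega>))) borel (\<lambda>\<omega>. snd (F_KGa_A eps (X \<omega>, Y \<omega>)))
    \<and> distributed M lborel (\<lambda>\<omega>. fst (F_KGa_A eps (X \<omega>, Y \<omega>)))
        (normalized_density (\<lambda>u. \<kappa> / (ZX * ZY) * h u))
    \<and> distributed M lborel (\<lambda>\<omega>. snd (F_KGa_A eps (X \<omega>, Y \<omega>))) (normalized_density k)"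
    using \<kappa> Z nonneg by (intro indep_var_of_joint_product_kernel) auto
  moreover have "normalized_density (\<lambda>u. \<kappa> / (ZX * ZY) * h u) = normalized_density h"
    using \<kappa> Z by (intro normalized_density_cmult) simp
  ultimately show ?thesis
    by simp
qed

section \<open>The gamma, K and beta-prime kernels\<close>

lemma K_kernel_measurable [measurable]: "K_kernel lam a b p q \<in> borel_measurable borel"
  unfolding K_kernel_def by measurable

lemma Ga_kernel_measurable [measurable]: "Ga_kernel A C \<in> borel_measurable borel"
  unfolding Ga_kernel_def by measurable

lemma BetaPrime_kernel_measurable [measurable]: "BetaPrime_kernel A B \<in> borel_measurable borel"
  unfolding BetaPrime_kernel_def by measurable

lemma K_kernel_nonneg: "0 \<le> K_kernel lam a b p q x"
  by (simp add: K_kernel_def)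

lemma Ga_kernel_nonneg: "0 \<le> Ga_kernel A C x"
  by (simp add: Ga_kernel_def)

lemma BetaPrime_kernel_nonneg: "0 \<le> BetaPrime_kernel A B x"
  by (simp add: BetaPrime_kernel_def)

lemma K_kernel_eq_0: "x \<le> 0 \<Longrightarrow> K_kernel lam a b p q x = 0"
  by (simp add: K_kernel_def)

lemma Ga_kernel_eq_0: "x \<le> 0 \<Longrightarrow> Ga_kernel A C x = 0"
  by (simp add: Ga_kernel_def)

lemma BetaPrime_kernel_eq_0: "x \<le> 0 \<Longrightarrow> BetaPrime_kernel A B x = 0"
  by (simp add: BetaPrime_kernel_def)

lemma Ga_kernel_Ga_kernel_factorization:
  fixes u v A B c :: real
  assumes u: "0 < u" and v: "0 < v"
  shows "u / (1 + v)\<^sup>2 * Ga_kernel A c (u * v / (1 + v)) * Ga_kernel B c (u / (1 + v))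
    = Ga_kernel (A + B) c u * BetaPrime_kernel A B v"
proof -
  define x where "x = u * v / (1 + v)"
  define y where "y = u / (1 + v)"
  have pos: "0 < x" "0 < y" "0 < 1 + v"
    using u v by (simp_all add: x_def y_def)
  have "x + y = u * (1 + v) / (1 + v)"
    by (simp add: x_def y_def add_divide_distrib algebra_simps)
  then have "x + y = u"
    using pos by simp
  then have exp: "exp (- c * x) * exp (- c * y) = exp (- c * u)"
    by (metis exp_add distrib_left mult_minus_left)
  have powr: "u / (1 + v)\<^sup>2 * x powr (A - 1) * y powr (B - 1)
      = u powr (A + B - 1) * (v powr (A - 1) * (1 + v) powr (- A - B))"
  proof -
    have "ln (u / (1 + v)\<^sup>2 * x powr (A - 1) * y powr (B - 1))
        = ln (u powr (A + B - 1) * (v powr (A - 1) * (1 + v) powr (- A - B)))"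
      using u v pos
      by (simp add: x_def y_def ln_mult ln_div ln_powr ln_realpow algebra_simps)
    then show ?thesis
      using u v pos by simp
  qed
  have "u / (1 + v)\<^sup>2 * Ga_kernel A c x * Ga_kernel B c y
      = (u / (1 + v)\<^sup>2 * x powr (A - 1) * y powr (B - 1)) * (exp (- c * x) * exp (- c * y))"
    using pos by (simp add: Ga_kernel_def)
  also have "\<dots> = Ga_kernel (A + B) c u * BetaPrime_kernel A B v"
    unfolding powr exp using u v by (simp add: Ga_kernel_def BetaPrime_kernel_def)
  finally show ?thesis
    by (simp add: x_def y_def)
qed

lemma K_kernel_Ga_kernel_factorization:
  fixes e u v lam b c :: real
  assumes e: "0 < e" and u: "0 < u" and v: "0 < v"
  shows "u * (1 + e * u) / (1 + e * u + v)\<^sup>2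
      * K_kernel lam c b 1 (1 / e) (u * v / (1 + e * u + v))
      * Ga_kernel (- lam) c (u * (1 + e * u) / (1 + e * u + v))
    = e powr (- lam) * K_kernel (- lam) c b 1 (1 / e) u * BetaPrime_kernel (b + lam / 2) (- lam) v"
proof -
  define S where "S = 1 + e * u"
  define x where "x = u * v / (S + v)"
  define y where "y = u * S / (S + v)"
  have pos: "0 < S" "0 < S + v" "0 < x" "0 < y"
    using e u v by (simp_all add: S_def x_def y_def add_pos_pos)
  have "x + y = u * (S + v) / (S + v)"
    by (simp add: x_def y_def add_divide_distrib algebra_simps)
  then have "x + y = u"
    using pos by simp
  then have exp: "exp (- c * 1 * x) * exp (- c * y) = exp (- c * 1 * u)"
    by (metis exp_add distrib_left mult_minus_left mult_1_right)
  have qx: "1 + 1 / (e * x) = S * (1 + v) / (e * u * v)"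
    using e u v pos by (simp add: x_def S_def field_simps)
  have qu: "1 + 1 / (e * u) = S / (e * u)"
    using e u by (simp add: S_def field_simps)
  have powr: "u * S / (S + v)\<^sup>2 * (x powr (lam - 1) * (S * (1 + v) / (e * u * v)) powr (- b + lam / 2))
      * y powr (- lam - 1)
    = e powr (- lam) * (u powr (- lam - 1) * (S / (e * u)) powr (- b + - lam / 2))
      * (v powr (b + lam / 2 - 1) * (1 + v) powr (- (b + lam / 2) - - lam))"
  proof -
    have "ln (u * S / (S + v)\<^sup>2 * (x powr (lam - 1) * (S * (1 + v) / (e * u * v)) powr (- b + lam / 2))
        * y powr (- lam - 1))
      = ln (e powr (- lam) * (u powr (- lam - 1) * (S / (e * u)) powr (- b + - lam / 2))
        * (v powr (b + lam / 2 - 1) * (1 + v) powr (- (b + lam / 2) - - lam)))"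
      using e u v pos unfolding x_def y_def
      by (simp add: ln_mult ln_div ln_powr ln_realpow) (simp add: field_simps)
    then show ?thesis
      using e u v pos by simp
  qed
  have "u * S / (S + v)\<^sup>2 * K_kernel lam c b 1 (1 / e) x * Ga_kernel (- lam) c y
    = (u * S / (S + v)\<^sup>2 * (x powr (lam - 1) * (S * (1 + v) / (e * u * v)) powr (- b + lam / 2))
      * y powr (- lam - 1)) * (exp (- c * 1 * x) * exp (- c * y))"
    using pos by (simp add: K_kernel_def Ga_kernel_def qx ac_simps)
  also have "\<dots> = e powr (- lam) * K_kernel (- lam) c b 1 (1 / e) u * BetaPrime_kernel (b + lam / 2) (- lam) v"
    unfolding powr exp using u v by (simp add: K_kernel_def BetaPrime_kernel_def qu ac_simps)
  finally show ?thesis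
    by (simp add: x_def y_def S_def)
qed

lemma F_Ga_plus_eq_F_KGa_A: "F_Ga_plus = F_KGa_A 0"
  by (simp add: fun_eq_iff F_Ga_plus_def F_KGa_A_def split: prod.split)

lemma (in prob_space) K_Ga_F_KGa_A_indep:
  fixes X Y :: "'a \<Rightarrow> real"
  assumes "0 < eps"
    and "distributed M lborel X (K_density lam c b 1 (1 / eps))"
    and "distributed M lborel Y (Ga_density (- lam) c)"
    and "indep_var borel X borel Y"
  shows "indep_var borel (\<lambda>\<omega>. fst (F_KGa_A eps (X \<omega>, Y \<omega>))) borel (\<lambda>\<omega>. snd (F_KGa_A eps (X \<omega>, Y \<omega>)))
    \<and> distributed M lborel (\<lambda>\<omega>. fst (F_KGa_A eps (X \<omega>, Y \<omega>))) (K_density (- lam) c b 1 (1 / eps))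
    \<and> distributed M lborel (\<lambda>\<omega>. snd (F_KGa_A eps (X \<omega>, Y \<omega>))) (BetaPrime_density (b + lam / 2) (- lam))"
  using assms K_kernel_Ga_kernel_factorization[of eps]
  unfolding K_density_def Ga_density_def BetaPrime_density_def
  by (intro indep_var_F_KGa_A_of_factorization[where \<kappa> = "eps powr (- lam)"
        and gX = "K_kernel lam c b 1 (1 / eps)" and gY = "Ga_kernel (- lam) c"])
    (simp_all add: K_kernel_nonneg Ga_kernel_nonneg
      BetaPrime_kernel_nonneg K_kernel_eq_0 Ga_kernel_eq_0 BetaPrime_kernel_eq_0)

lemma (in prob_space) Ga_Ga_F_Ga_plus_indep:
  fixes X Y :: "'a \<Rightarrow> real"
  assumes "distributed M lborel X (Ga_density A c)"
    and "distributed M lborel Y (Ga_density B c)"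
    and "indep_var borel X borel Y"
  shows "indep_var borel (\<lambda>\<omega>. fst (F_Ga_plus (X \<omega>, Y \<omega>))) borel (\<lambda>\<omega>. snd (F_Ga_plus (X \<omega>, Y \<omega>)))
    \<and> distributed M lborel (\<lambda>\<omega>. fst (F_Ga_plus (X \<omega>, Y \<omega>))) (Ga_density (A + B) c)
    \<and> distributed M lborel (\<lambda>\<omega>. snd (F_Ga_plus (X \<omega>, Y \<omega>))) (BetaPrime_density A B)"
  using assms Ga_kernel_Ga_kernel_factorization
  unfolding Ga_density_def BetaPrime_density_def F_Ga_plus_eq_F_KGa_A
  by (intro indep_var_F_KGa_A_of_factorization[where \<kappa> = 1
        and gX = "Ga_kernel A c" and gY = "Ga_kernel B c"])
    (simp_all add: Ga_kernel_nonneg BetaPrime_kernel_nonneg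
      Ga_kernel_eq_0 BetaPrime_kernel_eq_0)

theorem corollary5p2:
  fixes M :: "'a measure" and lam a b :: real
  assumes M: "prob_space M"
    and lam: "lam < 0" and a: "a > 0" and b: "b > 0" and lb: "- b < lam / 2"
  shows
   "(\<forall>(eps::real) (X::'a \<Rightarrow> real) (Y::'a \<Rightarrow> real). 
        eps > 0 \<and>
        distributed M lborel X (K_density lam (a * eps) b 1 (1 / eps)) \<and>
        distributed M lborel Y (Ga_density (- lam) (a * eps)) \<and>
        prob_space.indep_var M borel X borel Y \<longrightarrow>
        (let U = (\<lambda>\<omega>. fst (F_KGa_A eps (X \<omega>, Y \<omega>)));
             V = (\<lambda>\<omega>. snd (F_KGa_A eps (X \<omega>, Y \<omega>)))
         in prob_space.indep_var M borel U borel V \<and>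
            distributed M lborel U (K_density (- lam) (a * eps) b 1 (1 / eps)) \<and>
            distributed M lborel V (BetaPrime_density (b + lam / 2) (- lam))))
    \<and>
    (\<forall>(X::'a \<Rightarrow> real) (Y::'a \<Rightarrow> real).
        distributed M lborel X (Ga_density (b + lam / 2) a) \<and>
        distributed M lborel Y (Ga_density (- lam) a) \<and>
        prob_space.indep_var M borel X borel Y \<longrightarrow>
        (let U = (\<lambda>\<omega>. fst (F_Ga_plus (X \<omega>, Y \<omega>)));
             V = (\<lambda>\<omega>. snd (F_Ga_plus (X \<omega>, Y \<omega>)))
         in prob_space.indep_var M borel U borel V \<and>
            distributed M lborel U (Ga_density (b - lam / 2) a) \<and>
            distributed M lborel V (BetaPrime_density (b + lam / 2) (- lam))))"
proof -
  \<comment> \<open>The constraints on \<open>lam\<close>, \<open>a\<close>, \<open>b\<close> only make the kernels integrable; the argument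
    obtains integrability from the distributional hypotheses instead.\<close>
  have shape: "b + lam / 2 + - lam = b - lam / 2"
    by simp
  show ?thesis
    using prob_space.K_Ga_F_KGa_A_indep[OF M]
      prob_space.Ga_Ga_F_Ga_plus_indep[OF M, where A = "b + lam / 2" and B = "- lam", unfolded shape]
    by (auto simp: Let_def)
qed

end
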